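(* Let $S\ge 1$ be an integer, let $Q_{\boldsymbol{X}}$ be a probability distribution on a covariate space $\mathcal{X}$, and let $\tau^{(1)},\ldots,\tau^{(S)}\in L_2(Q_{\boldsymbol{X}})$. Let $\mathcal{F}\subset L_2(Q_{\boldsymbol{X}})$ be a model class that contains the convex hull of $\{\tau^{(1)},\ldots,\tau^{(S)}\}$. Consider the minimax problem \[ f_{\text{regret}}^*=\underset{f\in\mathcal{F}}{\arg\min}\ \max_{Q\in\mathcal{C}(Q_{\boldsymbol{X}})}\ \mathbb{E}_{Q_{\boldsymbol{X}}}\big[(f(\boldsymbol{X})-\tau_Q(\boldsymbol{X}))^2\big]. \] This problem can be equivalently expressed as \[ \{f_{\text{regret}}^*, R^*\}=\underset{f\in\mathcal{F},\,R\in\mathbb{R}}{\arg\min}\ R\quad\text{subject to}\quad \mathbb{E}_{Q_{\boldsymbol{X}}}\big[(f(\boldsymbol{X})-\tau^{(s)}(\boldsymbol{X}))^2\big]\le R\ \text{ for all } s\in\{1,\ldots,S\}, \] where $R^*$ denotes the smallest worst-case value achieved by $f_{\text{regret}}^*$. Furthermore, the solution $\{f_{\text{regret}}^*,R^*\}$ exists and there exist $q_1^*,\ldots,q_S^*$ such that \[ f_{\text{regret}}^*(\cdot)=\sum_{s=1}^S q_s^*\,\tau^{(s)}(\cdot), \] \[ q_s^*\Big(\mathbb{E}_{Q_{\boldsymbol{X}}}\big[(f_{\text{regret}}^*(\boldsymbol{X})-\tau^{(s)}(\boldsymbol{X}))^2\big]-R^*\Big)=0\quad\text{for all } s, \] \[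 \mathbb{E}_{Q_{\boldsymbol{X}}}\big[(f_{\text{regret}}^*(\boldsymbol{X})-\tau^{(s)}(\boldsymbol{X}))^2\big]\le R^*\quad\text{for all } s, \] \[ \sum_{s=1}^S q_s^*=1,\qquad q_s^*\ge 0\ \text{ for all } s. \]
   Context: Setting: there are $S$ source sites; site $s$ has a joint distribution $P^{(s)}$ of potential outcomes $(Y(1),Y(0))$ and covariates $\boldsymbol{X}\in\mathcal{X}$, with site-specific conditional average treatment effect (CATE) $\tau^{(s)}(\boldsymbol{x})=\mathbb{E}_{P^{(s)}}[Y(1)-Y(0)\mid \boldsymbol{X}=\boldsymbol{x}]$. For a joint distribution $Q$ of $(Y(1),Y(0),\boldsymbol{X})$, $\tau_Q(\boldsymbol{x})=\mathbb{E}_Q[Y(1)-Y(0)\mid\boldsymbol{X}=\boldsymbol{x}]$. $\Delta_{S-1}=\{\boldsymbol{q}\in\mathbb{R}^S:\sum_s q_s=1,\ \min_s q_s\ge 0\}$. The multisite uncertainty set is $\mathcal{C}(Q_{\boldsymbol{X}})=\{Q=(Q_{\boldsymbol{X}},Q_{(Y(1),Y(0))\mid\boldsymbol{X}}):\ \tau_Q(\cdot)=\sum_{s=1}^S q_s\tau^{(s)}(\cdot)\text{ for some }\boldsymbol{q}\in\Delta_{S-1}\}$, i.e. all joint distributions with covariate marginal $Q_{\boldsymbol{X}}$ whose CATE is a convex combination of the site CATEs. $L_2(Q_{\boldsymbol{X}})$ is the space of square-integrable measurable functions with respect to $Q_{\boldsymbol{X}}$. *)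

theory Defs
  imports "HOL-Probability.Probability"
begin

definition L2fun :: "'a measure \<Rightarrow> ('a \<Rightarrow> real) set" where
  "L2fun M = {f. f \<in> borel_measurable M \<and> integrable M (\<lambda>x. (f x)^2)}"

definition prob_simplex :: "nat \<Rightarrow> (nat \<Rightarrow> real) set" where
  "prob_simplex S = {q. (\<forall>s\<in>{1..S}. 0 \<le> q s) \<and> (\<Sum>s\<in>{1..S}. q s) = 1}"

definition mix :: "nat \<Rightarrow> (nat \<Rightarrow> 'a \<Rightarrow> real) \<Rightarrow> (nat \<Rightarrow> real) \<Rightarrow> 'a \<Rightarrow> real" where
  "mix S tau q = (\<lambda>x. \<Sum>s\<in>{1..S}. q s * tau s x)"

text \<open>The set of CATE functions tau_Q of the distributions Q in the multisite
  uncertainty set C(Q_X): exactly the convex combinations of the site CATEs.\<close>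
definition cate_set :: "nat \<Rightarrow> (nat \<Rightarrow> 'a \<Rightarrow> real) \<Rightarrow> ('a \<Rightarrow> real) set" where
  "cate_set S tau = mix S tau ` prob_simplex S"

definition mse :: "'a measure \<Rightarrow> ('a \<Rightarrow> real) \<Rightarrow> ('a \<Rightarrow> real) \<Rightarrow> real" where
  "mse M f g = (\<integral>x. (f x - g x)^2 \<partial>M)"

definition worst_risk :: "'a measure \<Rightarrow> nat \<Rightarrow> (nat \<Rightarrow> 'a \<Rightarrow> real) \<Rightarrow> ('a \<Rightarrow> real) \<Rightarrow> real" where
  "worst_risk M S tau f = (SUP g \<in> cate_set S tau. mse M f g)"

definition regret_argmin :: "'a measure \<Rightarrow> nat \<Rightarrow> (nat \<Rightarrow> 'a \<Rightarrow> real) \<Rightarrow> ('a \<Rightarrow> real) set \<Rightarrow> ('a \<Rightarrow> real) set" where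
  "regret_argmin M S tau F =
     {f \<in> F. \<forall>g\<in>F. worst_risk M S tau f \<le> worst_risk M S tau g}"

definition epi_feasible :: "'a measure \<Rightarrow> nat \<Rightarrow> (nat \<Rightarrow> 'a \<Rightarrow> real) \<Rightarrow> ('a \<Rightarrow> real) set \<Rightarrow> (('a \<Rightarrow> real) \<times> real) set" where
  "epi_feasible M S tau F =
     {(f, R). f \<in> F \<and> (\<forall>s\<in>{1..S}. mse M f (tau s) \<le> R)}"

definition epi_argmin :: "'a measure \<Rightarrow> nat \<Rightarrow> (nat \<Rightarrow> 'a \<Rightarrow> real) \<Rightarrow> ('a \<Rightarrow> real) set \<Rightarrow> (('a \<Rightarrow> real) \<times> real) set" where
  "epi_argmin M S tau F =
     {(f, R) \<in> epi_feasible M S tau F. \<forall>(g, R') \<in> epi_feasible M S tau F. R \<le> R'}"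

end

theory Submission
  imports Defs
begin

text \<open>
  The squared error is convex in its second argument, so over the convex hull of the site CATEs
  the worst case is attained at a vertex, and the minimax problem becomes the epigraph problem
  with one constraint per site.

  If \<open>p\<close> is the \<open>L\<^sub>2\<close>-projection of \<open>f\<close> onto the hull of some sites, then \<open>f - p\<close> makes an
  obtuse angle with \<open>tau s - p\<close> for each of these sites \<open>s\<close>, so \<open>p\<close> is closer than \<open>f\<close> to every
  one of them. Hence a minimiser of the worst-case risk over the compact hull, which exists by
  continuity, is a minimiser over all of \<open>L\<^sub>2\<close>. For an optimal \<open>f\<close>, let \<open>p\<close> be its projection onto
  the hull of the active sites. If \<open>p \<noteq> f\<close>, a small step from \<open>f\<close> towards \<open>p\<close> strictly lowers
  every active error while the inactive ones stay below the maximum, contradicting optimality.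
  So \<open>f = p\<close> almost everywhere, and the weights of \<open>p\<close> are supported on the active sites, which
  is complementary slackness.
\<close>

definition L2_inner :: "'a measure \<Rightarrow> ('a \<Rightarrow> real) \<Rightarrow> ('a \<Rightarrow> real) \<Rightarrow> real" where
  "L2_inner M u v = (\<integral>x. u x * v x \<partial>M)"

lemma integrable_mult_L2fun:
  assumes "u \<in> L2fun M" "v \<in> L2fun M"
  shows "integrable M (\<lambda>x. u x * v x)"
proof (rule Bochner_Integration.integrable_bound)
  show "integrable M (\<lambda>x. (u x)^2 + (v x)^2)"
    using assms by (simp add: L2fun_def)
  show "(\<lambda>x. u x * v x) \<in> borel_measurable M"
    using assms by (auto simp: L2fun_def)
  show "AE x in M. norm (u x * v x) \<le> norm ((u x)^2 + (v x)^2)"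
  proof (intro AE_I2)
    fix x
    have "2 * (\<bar>u x\<bar> * \<bar>v x\<bar>) \<le> (u x)^2 + (v x)^2"
      using sum_squares_bound[of "\<bar>u x\<bar>" "\<bar>v x\<bar>"] by simp
    moreover have "0 \<le> \<bar>u x\<bar> * \<bar>v x\<bar>"
      by simp
    ultimately have "\<bar>u x\<bar> * \<bar>v x\<bar> \<le> (u x)^2 + (v x)^2"
      by linarith
    then show "norm (u x * v x) \<le> norm ((u x)^2 + (v x)^2)"
      by (simp add: abs_mult)
  qed
qed

lemma L2fun_lincomb:
  assumes "u \<in> L2fun M" "v \<in> L2fun M"
  shows "(\<lambda>x. a * u x + b * v x) \<in> L2fun M"
proof -
  have "(\<lambda>x. (a * u x + b * v x)^2) = (\<lambda>x. a^2 * (u x)^2 + (2*a*b) * (u x * v x) + b^2 * (v x)^2)"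
    by (auto simp: power2_eq_square algebra_simps)
  then show ?thesis
    using assms integrable_mult_L2fun[OF assms] by (auto simp: L2fun_def)
qed

lemma L2fun_diff: "u \<in> L2fun M \<Longrightarrow> v \<in> L2fun M \<Longrightarrow> (\<lambda>x. u x - v x) \<in> L2fun M"
  using L2fun_lincomb[of u M v 1 "-1"] by simp

lemma L2fun_sum:
  assumes "finite I" "\<forall>i\<in>I. u i \<in> L2fun M"
  shows "(\<lambda>x. \<Sum>i\<in>I. c i * u i x) \<in> L2fun M"
  using assms
proof (induction I rule: finite_induct)
  case empty
  then show ?case by (simp add: L2fun_def)
next
  case (insert j I)
  then have "(\<lambda>x. c j * u j x + 1 * (\<Sum>i\<in>I. c i * u i x)) \<in> L2fun M"
    by (intro L2fun_lincomb) auto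
  then show ?case using insert by simp
qed

lemma L2fun_mix: "\<forall>s\<in>{1..S}. tau s \<in> L2fun M \<Longrightarrow> mix S tau q \<in> L2fun M"
  unfolding mix_def by (rule L2fun_sum) auto

lemma mse_nonneg: "0 \<le> mse M u v"
  unfolding mse_def by (rule integral_nonneg_AE) simp

lemma AE_eq_if_mse_eq_0:
  assumes "u \<in> L2fun M" "v \<in> L2fun M" "mse M u v = 0"
  shows "AE x in M. u x = v x"
proof -
  have "integrable M (\<lambda>x. (u x - v x)^2)"
    using L2fun_diff[OF assms(1,2)] by (simp add: L2fun_def)
  then have "AE x in M. (u x - v x)^2 = 0"
    using assms(3) unfolding mse_def by (subst (asm) integral_nonneg_eq_0_iff_AE) auto
  then show ?thesis by (rule AE_mp) auto
qed

lemma mse_cong_AE: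
  assumes "u \<in> L2fun M" "v \<in> L2fun M" "g \<in> L2fun M" "AE x in M. u x = v x"
  shows "mse M u g = mse M v g"
  unfolding mse_def
  by (rule integral_cong_AE) (use assms in \<open>auto simp: L2fun_def elim: AE_mp\<close>)

lemma mse_add_scaled:
  assumes "u \<in> L2fun M" "v \<in> L2fun M" "k \<in> L2fun M"
  shows "mse M (\<lambda>x. u x + e * v x) k
       = mse M u k - 2 * e * L2_inner M (\<lambda>x. k x - u x) v + e^2 * L2_inner M v v"
proof -
  have w: "(\<lambda>x. k x - u x) \<in> L2fun M"
    using assms by (simp add: L2fun_diff)
  have "mse M (\<lambda>x. u x + e * v x) k
      = (\<integral>x. (k x - u x)^2 - 2 * e * ((k x - u x) * v x) + e^2 * (v x * v x) \<partial>M)"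
    unfolding mse_def
    by (rule Bochner_Integration.integral_cong) (simp_all add: power2_eq_square algebra_simps)
  also have "\<dots> = mse M u k - 2 * e * L2_inner M (\<lambda>x. k x - u x) v + e^2 * L2_inner M v v"
    using w integrable_mult_L2fun[OF w assms(2)] integrable_mult_L2fun[OF assms(2,2)]
    by (simp add: L2_inner_def mse_def power2_commute L2fun_def)
  finally show ?thesis .
qed

lemma mse_step_toward_le:
  assumes u: "u \<in> L2fun M" and p: "p \<in> L2fun M" and k: "k \<in> L2fun M"
    and obtuse: "L2_inner M (\<lambda>x. u x - p x) (\<lambda>x. k x - p x) \<le> 0" and "0 \<le> e"
  shows "mse M (\<lambda>x. u x + e * (p x - u x)) k \<le> mse M u k - e * (2 - e) * mse M u p"
proof -
  have pu: "(\<lambda>x. p x - u x) \<in> L2fun M" and up: "(\<lambda>x. u x - p x) \<in> L2fun M"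
    and kp: "(\<lambda>x. k x - p x) \<in> L2fun M"
    using u p k by (simp_all add: L2fun_diff)
  have norm: "L2_inner M (\<lambda>x. p x - u x) (\<lambda>x. p x - u x) = mse M u p"
    unfolding L2_inner_def mse_def by (simp add: power2_eq_square algebra_simps)
  have "L2_inner M (\<lambda>x. k x - u x) (\<lambda>x. p x - u x)
      = (\<integral>x. (u x - p x)^2 - (u x - p x) * (k x - p x) \<partial>M)"
    unfolding L2_inner_def
    by (rule Bochner_Integration.integral_cong) (simp_all add: power2_eq_square algebra_simps)
  also have "\<dots> = mse M u p - L2_inner M (\<lambda>x. u x - p x) (\<lambda>x. k x - p x)"
    using up integrable_mult_L2fun[OF up kp] by (simp add: L2_inner_def mse_def L2fun_def)
  finally have "mse M u p \<le> L2_inner M (\<lambda>x. k x - u x) (\<lambda>x. p x - u x)"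
    using obtuse by simp
  then have "2 * e * mse M u p \<le> 2 * e * L2_inner M (\<lambda>x. k x - u x) (\<lambda>x. p x - u x)"
    using \<open>0 \<le> e\<close> by (simp add: mult_left_mono)
  then show ?thesis
    unfolding mse_add_scaled[OF u pu k] norm by (simp add: power2_eq_square algebra_simps)
qed

text \<open>Unlike \<^const>\<open>prob_simplex\<close>, weights in \<open>simplex_on A\<close> vanish outside \<open>A\<close>: this
  records the support of a mixture and makes the set compact in \<open>nat \<Rightarrow> real\<close>.\<close>

definition simplex_on :: "nat set \<Rightarrow> (nat \<Rightarrow> real) set" where
  "simplex_on A = {q. (\<forall>s\<in>A. 0 \<le> q s) \<and> (\<forall>s. s \<notin> A \<longrightarrow> q s = 0) \<and> sum q A = 1}"

lemma continuous_on_coordinate [continuous_intros]: "continuous_on X (\<lambda>q::nat \<Rightarrow> real. q i)"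
  by (rule continuous_on_subset[OF continuous_on_product_coordinates]) simp

lemma compact_simplex_on:
  assumes "finite A"
  shows "compact (simplex_on A)"
proof -
  define B where "B = PiE UNIV (\<lambda>s. if s \<in> A then {0..1::real} else {0})"
  have "compactin (product_topology (\<lambda>i. euclidean) UNIV) B"
    unfolding B_def by (subst compactin_PiE) auto
  then have "compact B"
    by (simp add: euclidean_product_topology)
  moreover have "closed (simplex_on A)"
    unfolding simplex_on_def Ball_def
    by (intro closed_Collect_conj closed_Collect_all closed_Collect_imp closed_Collect_le
        closed_Collect_eq open_Collect_const continuous_intros)
  moreover have "simplex_on A \<subseteq> B"
  proof
    fix q assume q: "q \<in> simplex_on A"
    have "q s \<le> 1" if "s \<in> A" for s
      using member_le_sum[of s A q] q that assms by (auto simp: simplex_on_def)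
    then show "q \<in> B"
      using q by (auto simp: B_def simplex_on_def PiE_iff)
  qed
  ultimately show ?thesis
    by (metis compact_Int_closed inf.absorb_iff2)
qed

lemma indicator_in_simplex_on: "finite A \<Longrightarrow> s \<in> A \<Longrightarrow> indicator {s} \<in> simplex_on A"
  by (auto simp: simplex_on_def indicator_def of_bool_def)

lemma simplex_on_convex:
  assumes "q \<in> simplex_on A" "r \<in> simplex_on A" "0 \<le> t" "t \<le> 1"
  shows "(\<lambda>s. (1 - t) * q s + t * r s) \<in> simplex_on A"
  using assms by (auto simp: simplex_on_def sum.distrib sum_distrib_left[symmetric])

lemma simplex_on_mono:
  assumes "finite B" "A \<subseteq> B"
  shows "simplex_on A \<subseteq> simplex_on B"
proof
  fix q assume q: "q \<in> simplex_on A"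
  have "sum q B = sum q A"
    using q assms by (intro sum.mono_neutral_right) (auto simp: simplex_on_def)
  then show "q \<in> simplex_on B"
    using q assms by (auto simp: simplex_on_def)
qed

lemma simplex_on_subset_prob_simplex: "simplex_on {1..S} \<subseteq> prob_simplex S"
  by (auto simp: simplex_on_def prob_simplex_def)

lemma mix_indicator: "s \<in> {1..S} \<Longrightarrow> mix S tau (indicator {s}) = tau s"
  by (simp add: mix_def indicator_def if_distrib cong: if_cong)

lemma mix_lincomb:
  "mix S tau (\<lambda>i. a * q i + b * r i) x = a * mix S tau q x + b * mix S tau r x"
  by (simp add: mix_def sum.distrib sum_distrib_left algebra_simps)

lemma mse_mix_le:
  assumes f: "f \<in> L2fun M" and tau: "\<forall>s\<in>{1..S}. tau s \<in> L2fun M"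
    and q: "q \<in> prob_simplex S" and S: "S \<ge> 1"
  shows "mse M f (mix S tau q) \<le> (\<Sum>s\<in>{1..S}. q s * mse M f (tau s))"
proof -
  have q0: "\<And>s. s \<in> {1..S} \<Longrightarrow> 0 \<le> q s" and q1: "(\<Sum>s\<in>{1..S}. q s) = 1"
    using q by (auto simp: prob_simplex_def)
  have int: "integrable M (\<lambda>x. (f x - tau s x)^2)" if "s \<in> {1..S}" for s
    using L2fun_diff[OF f] tau that by (simp add: L2fun_def)
  have "(f x - mix S tau q x)^2 \<le> (\<Sum>s\<in>{1..S}. q s * (f x - tau s x)^2)" for x
  proof -
    have "f x - mix S tau q x = (\<Sum>s\<in>{1..S}. q s *\<^sub>R (f x - tau s x))"
      using q1 by (simp add: mix_def right_diff_distrib sum_subtractf sum_distrib_right[symmetric])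
    then show ?thesis
      using convex_on_sum[OF _ _ convex_power2, of "{1..S}" q "\<lambda>s. f x - tau s x"] S q0 q1
      by simp
  qed
  then have "mse M f (mix S tau q) \<le> (\<integral>x. (\<Sum>s\<in>{1..S}. q s * (f x - tau s x)^2) \<partial>M)"
    unfolding mse_def using int L2fun_diff[OF f L2fun_mix[OF tau]]
    by (intro integral_mono) (auto simp: L2fun_def)
  also have "\<dots> = (\<Sum>s\<in>{1..S}. q s * mse M f (tau s))"
    using int by (simp add: mse_def)
  finally show ?thesis .
qed

lemma mse_mix_eq_quadratic:
  assumes tau: "\<forall>s\<in>{1..S}. tau s \<in> L2fun M" and g: "g \<in> L2fun M"
  shows "mse M (mix S tau q) g
      = (\<Sum>s\<in>{1..S}. \<Sum>t\<in>{1..S}. q s * q t * L2_inner M (tau s) (tau t))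
        - 2 * (\<Sum>s\<in>{1..S}. q s * L2_inner M (tau s) g) + L2_inner M g g"
proof -
  have "(mix S tau q x - g x)^2 = (\<Sum>s\<in>{1..S}. \<Sum>t\<in>{1..S}. q s * q t * (tau s x * tau t x))
      - 2 * (\<Sum>s\<in>{1..S}. q s * (tau s x * g x)) + g x * g x" for x
  proof -
    have "mix S tau q x * mix S tau q x
        = (\<Sum>s\<in>{1..S}. \<Sum>t\<in>{1..S}. q s * q t * (tau s x * tau t x))"
      by (simp add: mix_def sum_product mult_ac)
    moreover have "mix S tau q x * g x = (\<Sum>s\<in>{1..S}. q s * (tau s x * g x))"
      by (simp add: mix_def sum_distrib_left sum_distrib_right mult_ac)
    ultimately show ?thesis
      by (simp add: power2_eq_square algebra_simps)
  qed
  then have "mse M (mix S tau q) g = (\<integral>x. (\<Sum>s\<in>{1..S}. \<Sum>t\<in>{1..S}. q s * q t * (tau s x * tau t x))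
      - 2 * (\<Sum>s\<in>{1..S}. q s * (tau s x * g x)) + g x * g x \<partial>M)"
    by (simp add: mse_def)
  also have "\<dots> = (\<Sum>s\<in>{1..S}. \<Sum>t\<in>{1..S}. q s * q t * L2_inner M (tau s) (tau t))
      - 2 * (\<Sum>s\<in>{1..S}. q s * L2_inner M (tau s) g) + L2_inner M g g"
  proof -
    have tt: "integrable M (\<lambda>x. tau s x * tau t x)" and tg: "integrable M (\<lambda>x. tau s x * g x)"
      if "s \<in> {1..S}" "t \<in> {1..S}" for s t
      using tau g that by (simp_all add: integrable_mult_L2fun)
    have "integrable M (\<lambda>x. \<Sum>t\<in>{1..S}. q s * q t * (tau s x * tau t x))"
      if "s \<in> {1..S}" for s
      using tt that by (intro Bochner_Integration.integrable_sum integrable_mult_right) auto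
    moreover from this have
      "integrable M (\<lambda>x. \<Sum>s\<in>{1..S}. \<Sum>t\<in>{1..S}. q s * q t * (tau s x * tau t x))"
      by (rule Bochner_Integration.integrable_sum)
    moreover have "integrable M (\<lambda>x. \<Sum>s\<in>{1..S}. q s * (tau s x * g x))"
      using tg by (intro Bochner_Integration.integrable_sum integrable_mult_right) auto
    ultimately show ?thesis
      using tt tg integrable_mult_L2fun[OF g g]
      by (simp add: L2_inner_def Bochner_Integration.integral_sum)
  qed
  finally show ?thesis .
qed

lemma continuous_on_mse_mix:
  assumes "\<forall>s\<in>{1..S}. tau s \<in> L2fun M" "g \<in> L2fun M"
  shows "continuous_on X (\<lambda>q. mse M (mix S tau q) g)"
  unfolding mse_mix_eq_quadratic[OF assms] by (intro continuous_intros)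

definition max_mse :: "'a measure \<Rightarrow> nat \<Rightarrow> (nat \<Rightarrow> 'a \<Rightarrow> real) \<Rightarrow> ('a \<Rightarrow> real) \<Rightarrow> real" where
  "max_mse M S tau f = Max ((\<lambda>s. mse M f (tau s)) ` {1..S})"

lemma mse_le_max_mse: "s \<in> {1..S} \<Longrightarrow> mse M f (tau s) \<le> max_mse M S tau f"
  unfolding max_mse_def by (rule Max_ge) auto

lemma max_mse_attained: "S \<ge> 1 \<Longrightarrow> \<exists>s\<in>{1..S}. mse M f (tau s) = max_mse M S tau f"
  unfolding max_mse_def using Max_in[of "(\<lambda>s. mse M f (tau s)) ` {1..S}"] by fastforce

lemma max_mse_le_iff: "S \<ge> 1 \<Longrightarrow> max_mse M S tau f \<le> R \<longleftrightarrow> (\<forall>s\<in>{1..S}. mse M f (tau s) \<le> R)"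
  unfolding max_mse_def by (subst Max_le_iff) auto

lemma max_mse_less_iff: "S \<ge> 1 \<Longrightarrow> max_mse M S tau f < R \<longleftrightarrow> (\<forall>s\<in>{1..S}. mse M f (tau s) < R)"
  unfolding max_mse_def by (subst Max_less_iff) auto

lemma continuous_on_Max_image:
  fixes g :: "'i \<Rightarrow> 'b::topological_space \<Rightarrow> real"
  assumes "finite I" "I \<noteq> {}" "\<And>i. i \<in> I \<Longrightarrow> continuous_on X (g i)"
  shows "continuous_on X (\<lambda>x. Max ((\<lambda>i. g i x) ` I))"
  using assms
proof (induction I rule: finite_ne_induct)
  case (insert j I)
  then show ?case
    by (simp add: Max_insert continuous_on_max)
qed simp

lemma continuous_on_max_mse_mix:
  assumes "S \<ge> 1" "\<forall>s\<in>{1..S}. tau s \<in> L2fun M"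
  shows "continuous_on X (\<lambda>q. max_mse M S tau (mix S tau q))"
  unfolding max_mse_def using assms
  by (intro continuous_on_Max_image) (auto intro: continuous_on_mse_mix)

lemma worst_risk_eq_max_mse:
  assumes f: "f \<in> L2fun M" and tau: "\<forall>s\<in>{1..S}. tau s \<in> L2fun M" and S: "S \<ge> 1"
  shows "worst_risk M S tau f = max_mse M S tau f"
  unfolding worst_risk_def
proof (rule cSup_eq_maximum)
  obtain s where "s \<in> {1..S}" "mse M f (tau s) = max_mse M S tau f"
    using max_mse_attained[OF S] by blast
  then show "max_mse M S tau f \<in> mse M f ` cate_set S tau"
    unfolding cate_set_def
    by (metis (no_types, lifting) image_eqI mix_indicator simplex_on_subset_prob_simplex subsetD
        indicator_in_simplex_on finite_atLeastAtMost)
next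
  fix y assume "y \<in> mse M f ` cate_set S tau"
  then obtain q where q: "q \<in> prob_simplex S" and y: "y = mse M f (mix S tau q)"
    unfolding cate_set_def by auto
  have "y \<le> (\<Sum>s\<in>{1..S}. q s * mse M f (tau s))"
    unfolding y by (rule mse_mix_le[OF f tau q S])
  also have "\<dots> \<le> (\<Sum>s\<in>{1..S}. q s * max_mse M S tau f)"
    using q by (intro sum_mono mult_left_mono mse_le_max_mse) (auto simp: prob_simplex_def)
  also have "\<dots> = max_mse M S tau f"
    using q by (simp add: prob_simplex_def sum_distrib_right[symmetric])
  finally show "y \<le> max_mse M S tau f" .
qed

lemma nonpos_if_le_small_multiples:
  fixes c n :: real
  assumes "\<And>t. t \<in> {0<..<1} \<Longrightarrow> c \<le> t * n"
  shows "c \<le> 0"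
proof (rule tendsto_lowerbound)
  show "((\<lambda>t. t * n) \<longlongrightarrow> 0) (at_right 0)"
    by (intro tendsto_eq_intros) auto
  show "\<forall>\<^sub>F t in at_right 0. c \<le> t * n"
    using eventually_at_right_real[of 0 1] assms by (auto elim: eventually_mono)
qed simp

lemma exists_hull_projection:
  assumes tau: "\<forall>s\<in>{1..S}. tau s \<in> L2fun M" and f: "f \<in> L2fun M"
    and A: "A \<subseteq> {1..S}" "A \<noteq> {}"
  shows "\<exists>q\<in>simplex_on A. \<forall>s\<in>A.
           L2_inner M (\<lambda>x. f x - mix S tau q x) (\<lambda>x. tau s x - mix S tau q x) \<le> 0"
proof -
  have "finite A"
    using A(1) finite_subset by blast
  moreover from this have "simplex_on A \<noteq> {}"
    using A(2) indicator_in_simplex_on by blast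
  ultimately obtain q where q: "q \<in> simplex_on A"
    and min: "\<And>r. r \<in> simplex_on A \<Longrightarrow> mse M (mix S tau q) f \<le> mse M (mix S tau r) f"
    using continuous_attains_inf[OF compact_simplex_on _ continuous_on_mse_mix[OF tau f]] by blast
  define p where "p = mix S tau q"
  have p: "p \<in> L2fun M"
    unfolding p_def using tau by (rule L2fun_mix)
  have "L2_inner M (\<lambda>x. f x - p x) (\<lambda>x. tau s x - p x) \<le> 0" if s: "s \<in> A" for s
  proof -
    define d where "d = (\<lambda>x. tau s x - p x)"
    have d: "d \<in> L2fun M"
      unfolding d_def using tau s A p by (intro L2fun_diff) auto
    \<comment> \<open>optimality of \<open>q\<close> along the segment from \<open>p\<close> towards the vertex \<open>tau s\<close>\<close>
    have "2 * L2_inner M (\<lambda>x. f x - p x) d \<le> t * L2_inner M d d" if t: "t \<in> {0<..<1}" for t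
    proof -
      have "(\<lambda>i. (1 - t) * q i + t * indicator {s} i) \<in> simplex_on A"
        using simplex_on_convex[OF q indicator_in_simplex_on] \<open>finite A\<close> s t by auto
      moreover have "mix S tau (\<lambda>i. (1 - t) * q i + t * indicator {s} i) = (\<lambda>x. p x + t * d x)"
        using mix_indicator[of s S tau] s A
        by (intro ext) (simp only: mix_lincomb, auto simp: p_def d_def algebra_simps)
      ultimately have "mse M p f \<le> mse M (\<lambda>x. p x + t * d x) f"
        using min unfolding p_def by metis
      also have "\<dots> = mse M p f - 2 * t * L2_inner M (\<lambda>x. f x - p x) d + t^2 * L2_inner M d d"
        by (rule mse_add_scaled[OF p d f])
      finally have "t * (2 * L2_inner M (\<lambda>x. f x - p x) d) \<le> t * (t * L2_inner M d d)"
        by (simp add: power2_eq_square algebra_simps)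
      then show ?thesis
        using t by simp
    qed
    then have "2 * L2_inner M (\<lambda>x. f x - p x) d \<le> 0"
      by (rule nonpos_if_le_small_multiples)
    then show ?thesis
      unfolding d_def by simp
  qed
  then show ?thesis
    using q unfolding p_def by blast
qed

lemma exists_hull_point_reducing_max_mse:
  assumes S: "S \<ge> 1" and tau: "\<forall>s\<in>{1..S}. tau s \<in> L2fun M" and f: "f \<in> L2fun M"
  shows "\<exists>q\<in>simplex_on {1..S}.
           max_mse M S tau (mix S tau q) + mse M f (mix S tau q) \<le> max_mse M S tau f"
proof -
  obtain q where q: "q \<in> simplex_on {1..S}" and obtuse:
    "\<forall>s\<in>{1..S}. L2_inner M (\<lambda>x. f x - mix S tau q x) (\<lambda>x. tau s x - mix S tau q x) \<le> 0"
    using exists_hull_projection[OF tau f, of "{1..S}"] S by auto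
  have "max_mse M S tau (mix S tau q) \<le> max_mse M S tau f - mse M f (mix S tau q)"
    unfolding max_mse_le_iff[OF S]
  proof
    fix s assume s: "s \<in> {1..S}"
    have "mse M (\<lambda>x. f x + 1 * (mix S tau q x - f x)) (tau s)
        \<le> mse M f (tau s) - 1 * (2 - 1) * mse M f (mix S tau q)"
      by (rule mse_step_toward_le[OF f L2fun_mix[OF tau]]) (use tau s obtuse in auto)
    then show "mse M (mix S tau q) (tau s) \<le> max_mse M S tau f - mse M f (mix S tau q)"
      using mse_le_max_mse[OF s, of M f tau] by simp
  qed
  then show ?thesis
    using q by (intro bexI[OF _ q]) simp
qed

lemma exists_max_mse_minimizer_in_hull:
  assumes S: "S \<ge> 1" and tau: "\<forall>s\<in>{1..S}. tau s \<in> L2fun M"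
  shows "\<exists>q\<in>simplex_on {1..S}. \<forall>g\<in>L2fun M. max_mse M S tau (mix S tau q) \<le> max_mse M S tau g"
proof -
  have "simplex_on {1..S} \<noteq> {}"
    using indicator_in_simplex_on[of "{1..S}" 1] S by auto
  then obtain q where q: "q \<in> simplex_on {1..S}"
    and min: "\<And>r. r \<in> simplex_on {1..S} \<Longrightarrow>
                max_mse M S tau (mix S tau q) \<le> max_mse M S tau (mix S tau r)"
    using continuous_attains_inf[OF compact_simplex_on[OF finite_atLeastAtMost]
        _ continuous_on_max_mse_mix[OF S tau]] by blast
  have "max_mse M S tau (mix S tau q) \<le> max_mse M S tau g" if g: "g \<in> L2fun M" for g
  proof -
    obtain r where "r \<in> simplex_on {1..S}"
      and "max_mse M S tau (mix S tau r) + mse M g (mix S tau r) \<le> max_mse M S tau g"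
      using exists_hull_point_reducing_max_mse[OF S tau g] by blast
    then show ?thesis
      using min mse_nonneg[of M g "mix S tau r"] by force
  qed
  then show ?thesis
    using q by blast
qed

definition active_sites :: "'a measure \<Rightarrow> nat \<Rightarrow> (nat \<Rightarrow> 'a \<Rightarrow> real) \<Rightarrow> ('a \<Rightarrow> real) \<Rightarrow> nat set"
  where "active_sites M S tau f = {s\<in>{1..S}. mse M f (tau s) = max_mse M S tau f}"

lemma active_sites_nonempty: "S \<ge> 1 \<Longrightarrow> active_sites M S tau f \<noteq> {}"
  unfolding active_sites_def using max_mse_attained by fastforce

lemma exists_step_reducing_max_mse:
  assumes S: "S \<ge> 1" and tau: "\<forall>s\<in>{1..S}. tau s \<in> L2fun M"
    and u: "u \<in> L2fun M" and p: "p \<in> L2fun M"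
    and obtuse: "\<And>s. s \<in> active_sites M S tau u \<Longrightarrow>
                   L2_inner M (\<lambda>x. u x - p x) (\<lambda>x. tau s x - p x) \<le> 0"
    and "0 < mse M u p"
  shows "\<exists>e\<in>{0<..<1}. max_mse M S tau (\<lambda>x. u x + e * (p x - u x)) < max_mse M S tau u"
proof -
  let ?R = "max_mse M S tau u"
  have "\<forall>\<^sub>F e in at_right 0. mse M (\<lambda>x. u x + e * (p x - u x)) (tau s) < ?R"
    if s: "s \<in> {1..S}" for s
  proof (cases "mse M u (tau s) = ?R")
    case True
    have "mse M (\<lambda>x. u x + e * (p x - u x)) (tau s) < ?R" if e: "e \<in> {0<..<2}" for e
    proof -
      have "mse M (\<lambda>x. u x + e * (p x - u x)) (tau s) \<le> ?R - e * (2 - e) * mse M u p"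
        using mse_step_toward_le[OF u p _ obtuse] tau s e True by (simp add: active_sites_def)
      moreover have "0 < e * (2 - e) * mse M u p"
        using e \<open>0 < mse M u p\<close> by simp
      ultimately show ?thesis
        by linarith
    qed
    then show ?thesis
      using eventually_at_right_real[of 0 2] by (auto elim: eventually_mono)
  next
    case False
    then have "mse M u (tau s) < ?R"
      using mse_le_max_mse[OF s] order.not_eq_order_implies_strict by blast
    moreover have "((\<lambda>e. mse M (\<lambda>x. u x + e * (p x - u x)) (tau s)) \<longlongrightarrow> mse M u (tau s)) (at_right 0)"
      using mse_add_scaled[OF u L2fun_diff[OF p u], of "tau s"] tau s
      by (simp, intro tendsto_eq_intros) auto
    ultimately show ?thesis
      by (intro order_tendstoD(2))
  qed
  then have "\<forall>\<^sub>F e in at_right 0. max_mse M S tau (\<lambda>x. u x + e * (p x - u x)) < ?R"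
    by (subst max_mse_less_iff[OF S], intro eventually_ball_finite) auto
  moreover have "\<forall>\<^sub>F e in at_right 0. e \<in> {0<..<1::real}"
    by (rule eventually_at_right_real) simp
  ultimately have
    "\<forall>\<^sub>F e in at_right 0. e \<in> {0<..<1} \<and> max_mse M S tau (\<lambda>x. u x + e * (p x - u x)) < ?R"
    by eventually_elim simp
  then show ?thesis
    using eventually_happens[of _ "at_right (0::real)"] by force
qed

lemma hull_minimizer_AE_eq_active_mixture:
  assumes S: "S \<ge> 1" and tau: "\<forall>s\<in>{1..S}. tau s \<in> L2fun M"
    and q0: "q0 \<in> simplex_on {1..S}"
    and min: "\<And>q. q \<in> simplex_on {1..S} \<Longrightarrow>
                max_mse M S tau (mix S tau q0) \<le> max_mse M S tau (mix S tau q)"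
  shows "\<exists>q\<in>simplex_on (active_sites M S tau (mix S tau q0)).
           AE x in M. mix S tau q0 x = mix S tau q x"
proof -
  define p0 where "p0 = mix S tau q0"
  define A where "A = active_sites M S tau p0"
  have p0: "p0 \<in> L2fun M"
    unfolding p0_def using tau by (rule L2fun_mix)
  have A: "A \<subseteq> {1..S}" "A \<noteq> {}"
    unfolding A_def using active_sites_nonempty[OF S] by (auto simp: active_sites_def)
  then obtain q where q: "q \<in> simplex_on A" and obtuse:
    "\<forall>s\<in>A. L2_inner M (\<lambda>x. p0 x - mix S tau q x) (\<lambda>x. tau s x - mix S tau q x) \<le> 0"
    using exists_hull_projection[OF tau p0] by blast
  have "mse M p0 (mix S tau q) = 0"
  proof (rule ccontr)
    assume "mse M p0 (mix S tau q) \<noteq> 0"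
    then have "0 < mse M p0 (mix S tau q)"
      using mse_nonneg[of M p0] by (simp add: order_less_le)
    then obtain e where e: "e \<in> {0<..<1}"
      and less: "max_mse M S tau (\<lambda>x. p0 x + e * (mix S tau q x - p0 x)) < max_mse M S tau p0"
      using exists_step_reducing_max_mse[OF S tau p0 L2fun_mix[OF tau]] obtuse
      unfolding A_def by blast
    have "(\<lambda>x. p0 x + e * (mix S tau q x - p0 x)) = mix S tau (\<lambda>i. (1 - e) * q0 i + e * q i)"
      by (intro ext) (simp only: mix_lincomb, simp add: p0_def algebra_simps)
    moreover have "(\<lambda>i. (1 - e) * q0 i + e * q i) \<in> simplex_on {1..S}"
      using simplex_on_convex[OF q0 subsetD[OF simplex_on_mono q]] A e by auto
    ultimately show False
      using less min unfolding p0_def by (metis not_le)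
  qed
  then show ?thesis
    using AE_eq_if_mse_eq_0[OF p0 L2fun_mix[OF tau]] q unfolding A_def p0_def by blast
qed

lemma max_mse_minimizer_AE_eq_active_mixture:
  assumes S: "S \<ge> 1" and tau: "\<forall>s\<in>{1..S}. tau s \<in> L2fun M" and f: "f \<in> L2fun M"
    and min: "\<And>q. q \<in> simplex_on {1..S} \<Longrightarrow> max_mse M S tau f \<le> max_mse M S tau (mix S tau q)"
  shows "\<exists>q\<in>simplex_on (active_sites M S tau f). AE x in M. f x = mix S tau q x"
proof -
  obtain q0 where q0: "q0 \<in> simplex_on {1..S}"
    and le: "max_mse M S tau (mix S tau q0) + mse M f (mix S tau q0) \<le> max_mse M S tau f"
    using exists_hull_point_reducing_max_mse[OF S tau f] by blast
  then have "mse M f (mix S tau q0) = 0"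
    using min[OF q0] mse_nonneg[of M f "mix S tau q0"] by linarith
  then have f_AE: "AE x in M. f x = mix S tau q0 x"
    using AE_eq_if_mse_eq_0[OF f L2fun_mix[OF tau]] by blast
  have same_mse: "mse M f (tau s) = mse M (mix S tau q0) (tau s)" if "s \<in> {1..S}" for s
    using mse_cong_AE[OF f L2fun_mix[OF tau] _ f_AE] tau that by blast
  then have same_max: "max_mse M S tau f = max_mse M S tau (mix S tau q0)"
    unfolding max_mse_def by (metis (no_types, lifting) image_cong)
  obtain q where q: "q \<in> simplex_on (active_sites M S tau (mix S tau q0))"
    and q0_AE: "AE x in M. mix S tau q0 x = mix S tau q x"
    using hull_minimizer_AE_eq_active_mixture[OF S tau q0] min same_max by auto
  have "active_sites M S tau (mix S tau q0) = active_sites M S tau f"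
    using same_mse same_max by (auto simp: active_sites_def)
  moreover have "AE x in M. f x = mix S tau q x"
    using f_AE q0_AE by eventually_elim simp
  ultimately show ?thesis
    using q by auto
qed

lemma epi_feasible_iff:
  "S \<ge> 1 \<Longrightarrow> (f, R) \<in> epi_feasible M S tau F \<longleftrightarrow> f \<in> F \<and> max_mse M S tau f \<le> R"
  by (simp add: epi_feasible_def max_mse_le_iff)

lemma epi_argmin_iff:
  assumes "S \<ge> 1"
  shows "(f, R) \<in> epi_argmin M S tau F \<longleftrightarrow>
           f \<in> F \<and> R = max_mse M S tau f \<and> (\<forall>g\<in>F. max_mse M S tau f \<le> max_mse M S tau g)"
proof
  assume "(f, R) \<in> epi_argmin M S tau F"
  then have f: "f \<in> F" "max_mse M S tau f \<le> R"
    and lower: "\<And>g R'. (g, R') \<in> epi_feasible M S tau F \<Longrightarrow> R \<le> R'"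
    unfolding epi_argmin_def by (auto simp: epi_feasible_iff[OF assms])
  have "R \<le> max_mse M S tau g" if "g \<in> F" for g
    using lower[of g "max_mse M S tau g"] that by (simp add: epi_feasible_iff[OF assms])
  then show "f \<in> F \<and> R = max_mse M S tau f \<and> (\<forall>g\<in>F. max_mse M S tau f \<le> max_mse M S tau g)"
    using f by (meson order.antisym order.trans)
next
  assume "f \<in> F \<and> R = max_mse M S tau f \<and> (\<forall>g\<in>F. max_mse M S tau f \<le> max_mse M S tau g)"
  then show "(f, R) \<in> epi_argmin M S tau F"
    unfolding epi_argmin_def by (force simp: epi_feasible_iff[OF assms] intro: order_trans)
qed

lemma epi_argmin_KKT:
  assumes S: "S \<ge> 1" and tau: "\<forall>s\<in>{1..S}. tau s \<in> L2fun M" and F: "F \<subseteq> L2fun M"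
    and hull: "\<forall>q\<in>prob_simplex S. mix S tau q \<in> F"
    and fR: "(f, R) \<in> epi_argmin M S tau F"
  shows "\<exists>q\<in>prob_simplex S. (AE x in M. f x = mix S tau q x)
           \<and> (\<forall>s\<in>{1..S}. q s * (mse M f (tau s) - R) = 0) \<and> (\<forall>s\<in>{1..S}. mse M f (tau s) \<le> R)"
proof -
  have f: "f \<in> F" and R: "R = max_mse M S tau f"
    and min: "\<forall>g\<in>F. max_mse M S tau f \<le> max_mse M S tau g"
    using fR by (auto simp: epi_argmin_iff[OF S])
  have "max_mse M S tau f \<le> max_mse M S tau (mix S tau q)" if "q \<in> simplex_on {1..S}" for q
    using min hull simplex_on_subset_prob_simplex that by blast
  then obtain q where q: "q \<in> simplex_on (active_sites M S tau f)"
    and AE: "AE x in M. f x = mix S tau q x"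
    using max_mse_minimizer_AE_eq_active_mixture[OF S tau subsetD[OF F f]] by blast
  have "active_sites M S tau f \<subseteq> {1..S}"
    by (auto simp: active_sites_def)
  then have "q \<in> prob_simplex S"
    using q simplex_on_mono[OF finite_atLeastAtMost] simplex_on_subset_prob_simplex by blast
  moreover have "q s * (mse M f (tau s) - R) = 0" for s
    using q R by (cases "s \<in> active_sites M S tau f") (auto simp: simplex_on_def active_sites_def)
  moreover have "mse M f (tau s) \<le> R" if "s \<in> {1..S}" for s
    using mse_le_max_mse[OF that] R by simp
  ultimately show ?thesis
    using AE by blast
qed

theorem proposition1:
  fixes M :: "'a measure" and S :: nat and tau :: "nat \<Rightarrow> 'a \<Rightarrow> real"
    and F :: "('a \<Rightarrow> real) set"
  assumes "prob_space M"
    and "S \<ge> 1"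
    and "\<forall>s\<in>{1..S}. tau s \<in> L2fun M"
    and "F \<subseteq> L2fun M"
    and "\<forall>q\<in>prob_simplex S. mix S tau q \<in> F"
  shows "epi_argmin M S tau F = {(f, worst_risk M S tau f) | f. f \<in> regret_argmin M S tau F}
       \<and> epi_argmin M S tau F \<noteq> {}
       \<and> (\<forall>(f, R) \<in> epi_argmin M S tau F. \<exists>q \<in> prob_simplex S.
            (AE x in M. f x = mix S tau q x)
          \<and> (\<forall>s\<in>{1..S}. q s * (mse M f (tau s) - R) = 0)
          \<and> (\<forall>s\<in>{1..S}. mse M f (tau s) \<le> R))"
proof -
  note S = assms(2) and tau = assms(3) and F = assms(4)
  have risk: "worst_risk M S tau f = max_mse M S tau f" if "f \<in> F" for f
    using F worst_risk_eq_max_mse[OF _ tau S] that by blast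
  have epi_eq: "epi_argmin M S tau F = {(f, worst_risk M S tau f) | f. f \<in> regret_argmin M S tau F}"
    by (auto simp: epi_argmin_iff[OF S] regret_argmin_def risk)
  obtain q where q: "q \<in> simplex_on {1..S}"
    and opt: "\<forall>g\<in>L2fun M. max_mse M S tau (mix S tau q) \<le> max_mse M S tau g"
    using exists_max_mse_minimizer_in_hull[OF S tau] by blast
  have "mix S tau q \<in> F"
    using q assms(5) simplex_on_subset_prob_simplex by blast
  then have "(mix S tau q, max_mse M S tau (mix S tau q)) \<in> epi_argmin M S tau F"
    using opt F by (auto simp: epi_argmin_iff[OF S])
  then show ?thesis
    using epi_eq epi_argmin_KKT[OF S tau F assms(5)] by blast
qed

end
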